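(* Let $\Sigma\in\mathcal{G}_n$, let $Q_0$ be the unique regular rational orthogonal matrix with $Q_0^{\rm T}S(\Sigma)Q_0=S(\Sigma^{\rm T})$, with level $\ell_0$, and set $\bar Q_0=\ell_0Q_0$. Let $p$ be an odd prime with $p\nmid\ell_0$. Then, over $\mathbb{F}_p$: if $n$ is even, $\mathrm{rank}(\ell_0I-\bar Q_0)=\mathrm{rank}(\ell_0I+\bar Q_0)=\frac n2$; if $n$ is odd, $\mathrm{rank}(\ell_0I-\bar Q_0)=\frac{n-1}2$ and $\mathrm{rank}(\ell_0I+\bar Q_0)=\frac{n+1}2$.
   Context: An oriented graph on vertices $v_1,\dots,v_n$ is a simple graph with each edge directed; its skew-adjacency matrix $S(\Sigma)=(s_{ij})$ has $s_{ij}=1$ if $(v_i,v_j)$ is an arc, $-1$ if $(v_j,v_i)$ is an arc, $0$ otherwise. The converse $\Sigma^{\rm T}$ reverses every arc, so $S(\Sigma^{\rm T})=-S(\Sigma)$. With $e$ the all-one vector, $W(\Sigma)=[e,Se,\dots,S^{n-1}e]$, $S=S(\Sigma)$. $\mathcal{G}_n$ is the set of $n$-vertex oriented graphs with $2^{-\lfloor n/2\rfloor}\det W(\Sigma)$ an odd square-free integer. A rational orthogonal matrix $Q$ is regular if $Qe=e$; its level is the least positive integer $k$ with $kQ$ integral. Since $\det W(\Sigma)\neq0$, $Q_0$ exists and is unique. *)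

theory Defs
  imports "Jordan_Normal_Form.DL_Rank" "Berlekamp_Zassenhaus.Finite_Field"
    "HOL-Computational_Algebra.Squarefree"
begin

text \<open>Oriented graph on vertices 0..n-1 (standing for v_1..v_n), given by its arc set.\<close>
definition oriented_graph :: "nat \<Rightarrow> (nat \<times> nat) set \<Rightarrow> bool" where
  "oriented_graph n Arc \<longleftrightarrow> Arc \<subseteq> {0..<n} \<times> {0..<n} \<and>
     (\<forall>i j. (i, j) \<in> Arc \<longrightarrow> (j, i) \<notin> Arc)"

definition converse_graph :: "(nat \<times> nat) set \<Rightarrow> (nat \<times> nat) set" where
  "converse_graph Arc = {(j, i). (i, j) \<in> Arc}"

definition skew_adj :: "nat \<Rightarrow> (nat \<times> nat) set \<Rightarrow> int mat" where
  "skew_adj n Arc = mat n n (\<lambda>(i, j). if (i, j) \<in> Arc then 1 else if (j, i) \<in> Arc then -1 else 0)"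

definition walk_matrix :: "nat \<Rightarrow> (nat \<times> nat) set \<Rightarrow> int mat" where
  "walk_matrix n Arc = mat n n (\<lambda>(i, j). ((skew_adj n Arc ^\<^sub>m j) *\<^sub>v vec n (\<lambda>_. 1)) $ i)"

definition in_G :: "nat \<Rightarrow> (nat \<times> nat) set \<Rightarrow> bool" where
  "in_G n Arc \<longleftrightarrow> oriented_graph n Arc \<and>
     (\<exists>m::int. det (walk_matrix n Arc) = 2 ^ (n div 2) * m \<and> odd m \<and> squarefree m)"

definition regular_rat_orthogonal :: "nat \<Rightarrow> rat mat \<Rightarrow> bool" where
  "regular_rat_orthogonal n Q \<longleftrightarrow> Q \<in> carrier_mat n n \<and> Q\<^sup>T * Q = 1\<^sub>m n \<and>
     Q *\<^sub>v vec n (\<lambda>_. 1) = vec n (\<lambda>_. 1)"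

definition level :: "rat mat \<Rightarrow> nat" where
  "level Q = (LEAST k::nat. 0 < k \<and>
     (\<forall>i < dim_row Q. \<forall>j < dim_col Q. of_nat k * Q $$ (i, j) \<in> \<int>))"

text \<open>The integral matrix k Q (entries are integers when k Q is integral).\<close>
definition scaled_int_mat :: "nat \<Rightarrow> rat mat \<Rightarrow> int mat" where
  "scaled_int_mat k Q = mat (dim_row Q) (dim_col Q) (\<lambda>(i, j). \<lfloor>of_nat k * Q $$ (i, j)\<rfloor>)"

text \<open>Reduction of an integer matrix modulo p = CARD('p).\<close>
definition mod_p_mat :: "int mat \<Rightarrow> 'p::prime_card mod_ring mat" where
  "mod_p_mat A = map_mat of_int A"

end

theory Submission
  imports Defs
begin

(* Conjugating S by Q0 gives -S, so Q0 anticommutes with S and, fixing e, maps S^k e to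
   (-1)^k S^k e. The columns of the walk matrix W therefore form a rational eigenbasis of Q0
   (det W is nonzero), with eigenvalue 1 on the ceil(n/2) even-indexed columns and -1 on the
   floor(n/2) odd-indexed ones. This bounds the rational ranks of l0 I - l0 Q0 and
   l0 I + l0 Q0 by floor(n/2) and ceil(n/2), and the ranks of the integer matrices
   l0 I - Qb and l0 I + Qb can only drop modulo p. On the other hand, the two reductions add
   up to 2 l0 I, which is invertible modulo p, so the two ranks add up to at least n and both
   bounds are attained. *)

section \<open>Rank over a field\<close>

lemma smult_mat_mult_vec:
  "A \<in> carrier_mat nr nc \<Longrightarrow> v \<in> carrier_vec nc \<Longrightarrow> (k \<cdot>\<^sub>m A) *\<^sub>v v = k \<cdot>\<^sub>v (A *\<^sub>v v)"
  by (intro eq_vecI) (auto simp: scalar_prod_def sum_distrib_left ac_simps)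

lemma (in vec_space) rank_le_card_span:
  assumes X: "X \<in> carrier_mat n m" and T: "T \<subseteq> carrier_vec n" "finite T"
    and sub: "set (cols X) \<subseteq> span T"
  shows "rank X \<le> card T"
proof -
  let ?C = "set (cols X)"
  have C: "?C \<subseteq> carrier_vec n" using X cols_dim by blast
  have sT: "VectorSpace.subspace class_ring (span T) V" using span_is_subspace T(1) by simp
  have sC: "VectorSpace.subspace class_ring (span ?C) V" using span_is_subspace C by simp
  have vsT: "vectorspace class_ring (vs (span T))" using sT subspace_is_vs by simp
  have dim_C: "vectorspace.dim class_ring (span_vs ?C) \<le> vectorspace.dim class_ring (vs (span T))"
  proof -
    have "VectorSpace.subspace class_ring (span ?C) (vs (span T))"
      using nested_subspaces[OF sT sC span_subsetI[OF T(1) sub]] .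
    moreover have "vectorspace.fin_dim class_ring (vs (span T))" using fin_dim_span T by simp
    moreover have "vectorspace.fin_dim class_ring ((vs (span T))\<lparr>carrier := span ?C\<rparr>)"
      using fin_dim_span[of ?C] C by simp
    ultimately show ?thesis using vectorspace.subspace_dim[OF vsT] by simp
  qed
  have T_span: "T \<subseteq> span T" using in_own_span T(1) by simp
  have "LinearCombinations.module.span class_ring (vs (span T)) T = carrier (vs (span T))"
    using span_li_not_depend(1)[OF T_span span_is_submodule[OF T(1)]] by auto
  then have "vectorspace.dim class_ring (vs (span T)) \<le> card T"
    using vectorspace.gen_ge_dim[OF vsT T(2)] T_span by simp
  then show ?thesis unfolding rank_def using dim_C by simp
qed

lemma (in vec_space) rank_le_card_nonzero_images:
  assumes X: "X \<in> carrier_mat n n" and W: "W \<in> carrier_mat n n" and det: "det W \<noteq> 0"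
  shows "rank X \<le> card {k. k < n \<and> X *\<^sub>v col W k \<noteq> 0\<^sub>v n}"
proof -
  let ?K = "{k. k < n \<and> X *\<^sub>v col W k \<noteq> 0\<^sub>v n}"
  let ?T = "(\<lambda>k. X *\<^sub>v col W k) ` ?K"
  have T: "?T \<subseteq> carrier_vec n" using X W by auto
  obtain W' where W': "W' \<in> carrier_mat n n" "W * W' = 1\<^sub>m n"
    using det_non_zero_imp_unit[OF W det] unfolding Units_def by (auto simp: ring_mat_simps)
  have "0\<^sub>v n \<in> span ?T" using vectorspace.span_zero[OF vec_vs, of n ?T] by simp
  then have in_span: "X *\<^sub>v col W k \<in> span ?T" if "k < n" for k
    using that in_own_span[OF T] by (cases "X *\<^sub>v col W k = 0\<^sub>v n") auto
  have "set (cols (X * W)) \<subseteq> span ?T"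
  proof
    fix c assume "c \<in> set (cols (X * W))"
    then obtain k where "k < n" "c = col (X * W) k" using X W by (auto simp: cols_def)
    then show "c \<in> span ?T" using col_mult2[OF X W] in_span by simp
  qed
  then have XW_span: "span (set (cols (X * W))) \<subseteq> span ?T" by (rule span_subsetI[OF T])
  have "set (cols X) \<subseteq> span (set (cols (X * W)))"
  proof
    fix c assume "c \<in> set (cols X)"
    then obtain j where j: "j < n" "c = col X j" using X by (auto simp: cols_def)
    have "X = (X * W) * W'" using X W W' by (simp add: assoc_mult_mat[OF X W W'(1)])
    then have "c = (X * W) *\<^sub>v col W' j" using j X W W' by (metis col_mult2 mult_carrier_mat)
    then have "c \<in> col_space (X * W)"
      unfolding col_space_eq[OF mult_carrier_mat[OF X W]] using X W W' j
      by (auto intro!: bexI[of _ "col W' j"])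
    then show "c \<in> span (set (cols (X * W)))" unfolding col_space_def .
  qed
  then have "rank X \<le> card ?T" using rank_le_card_span[OF X T] XW_span by auto
  also have "\<dots> \<le> card ?K" by (rule card_image_le) simp
  finally show ?thesis .
qed

lemma (in vec_space) rank_le_card_eigenbasis:
  assumes Q: "Q \<in> carrier_mat n n" and W: "W \<in> carrier_mat n n" "det W \<noteq> 0"
    and eigen: "\<And>k. k < n \<Longrightarrow> Q *\<^sub>v col W k = \<mu> k \<cdot>\<^sub>v col W k"
  shows "rank (c \<cdot>\<^sub>m 1\<^sub>m n + d \<cdot>\<^sub>m Q) \<le> card {k. k < n \<and> c + d * \<mu> k \<noteq> 0}"
proof -
  let ?X = "c \<cdot>\<^sub>m 1\<^sub>m n + d \<cdot>\<^sub>m Q"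
  have "?X *\<^sub>v col W k = (c + d * \<mu> k) \<cdot>\<^sub>v col W k" if "k < n" for k
  proof -
    have w: "col W k \<in> carrier_vec n" using W that by simp
    show ?thesis
      using Q w eigen[OF that]
      by (simp add: add_mult_distrib_mat_vec[of _ n n] smult_mat_mult_vec[of _ n n]
          smult_smult_assoc add_smult_distrib_vec)
  qed
  moreover have "0 \<cdot>\<^sub>v col W k = 0\<^sub>v n" if "k < n" for k
    using W that by (intro eq_vecI) auto
  ultimately have "{k. k < n \<and> ?X *\<^sub>v col W k \<noteq> 0\<^sub>v n} \<subseteq> {k. k < n \<and> c + d * \<mu> k \<noteq> 0}"
    by auto
  then have "card {k. k < n \<and> ?X *\<^sub>v col W k \<noteq> 0\<^sub>v n} \<le> card {k. k < n \<and> c + d * \<mu> k \<noteq> 0}"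
    by (rule card_mono[rotated]) simp
  moreover have "?X \<in> carrier_mat n n" using Q by simp
  ultimately show ?thesis using rank_le_card_nonzero_images[OF _ W] by (meson le_trans)
qed

lemma (in vec_space) le_rank_add_of_add_eq_smult_one:
  assumes A: "A \<in> carrier_mat n n" and B: "B \<in> carrier_mat n n"
    and sum: "A + B = c \<cdot>\<^sub>m 1\<^sub>m n" and c: "c \<noteq> 0"
  shows "n \<le> rank A + rank B"
proof -
  have "det (A + B) \<noteq> 0" unfolding sum using c by simp
  then have "rank (A + B) = n" using det_rank_iff[of "A + B"] A B by simp
  then show ?thesis using rank_subadditive[OF A B] by simp
qed

section \<open>Rank of an integer matrix modulo p\<close>

lemma common_denominator:
  fixes f :: "'a \<Rightarrow> rat"
  assumes "finite I"
  shows "\<exists>d::int. d > 0 \<and> (\<forall>i\<in>I. of_int d * f i \<in> \<int>)"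
proof (intro exI conjI ballI)
  let ?den = "\<lambda>i. snd (quotient_of (f i))"
  show "(\<Prod>i\<in>I. ?den i) > 0"
    by (simp add: prod_pos quotient_of_denom_pos')
  fix i assume i: "i \<in> I"
  have "of_int (?den i) * f i = of_int (fst (quotient_of (f i)))"
    using quotient_of_div[of "f i"] quotient_of_denom_pos'[of "f i"]
    by (cases "quotient_of (f i)") auto
  then have "of_int (?den i) * f i \<in> \<int>" by simp
  then have "of_int (\<Prod>j\<in>I - {i}. ?den j) * (of_int (?den i) * f i) \<in> \<int>"
    by (rule Ints_mult[OF Ints_of_int])
  then show "of_int (\<Prod>i\<in>I. ?den i) * f i \<in> \<int>"
    unfolding prod.remove[OF assms i] by (simp add: ac_simps)
qed

lemma rat_vec_clear_denominators:
  fixes v :: "rat vec"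
  assumes "v \<in> carrier_vec r"
  obtains d :: int and y where "d \<noteq> 0" "y \<in> carrier_vec r" "map_vec of_int y = of_int d \<cdot>\<^sub>v v"
proof -
  obtain d :: int where d: "d > 0" "\<forall>k\<in>{..<r}. of_int d * v $ k \<in> \<int>"
    using common_denominator[of "{..<r}" "\<lambda>k. v $ k"] by auto
  define y where "y = vec r (\<lambda>k. \<lfloor>of_int d * v $ k\<rfloor>)"
  have "map_vec of_int y = of_int d \<cdot>\<^sub>v v"
    using d(2) assms unfolding y_def by (auto elim!: Ints_cases)
  with d(1) show thesis by (intro that[of d y]) (auto simp: y_def)
qed

lemma of_int_mod_ring_eq_0_iff: "(of_int x :: 'p::prime_card mod_ring) = 0 \<longleftrightarrow> int CARD('p) dvd x"
  unfolding of_int_of_int_mod_ring by transfer auto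

lemma int_vec_primitive_mod_p:
  fixes y :: "int vec"
  assumes y: "y \<in> carrier_vec r" "y \<noteq> 0\<^sub>v r"
  obtains g z where "g \<noteq> 0" "z \<in> carrier_vec r" "y = g \<cdot>\<^sub>v z"
    "(map_vec of_int z :: 'p::prime_card mod_ring vec) \<noteq> 0\<^sub>v r"
proof -
  define g where "g = Gcd (set\<^sub>v y)"
  have g_dvd: "g dvd y $ k" if "k < r" for k
    unfolding g_def using that y(1) by (intro Gcd_dvd) (auto simp: vec_setI)
  obtain k0 where "k0 < r" "y $ k0 \<noteq> 0" using y by (metis eq_vecI carrier_vecD index_zero_vec)
  then have g0: "g \<noteq> 0" using g_dvd by auto
  define z where "z = vec r (\<lambda>k. y $ k div g)"
  have yz: "y = g \<cdot>\<^sub>v z" using g_dvd y(1) unfolding z_def by auto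
  have "(map_vec of_int z :: 'p mod_ring vec) \<noteq> 0\<^sub>v r"
  proof
    assume "map_vec of_int z = (0\<^sub>v r :: 'p mod_ring vec)"
    have "(of_int (z $ k) :: 'p mod_ring) = 0" if "k < r" for k
    proof -
      have "(of_int (z $ k) :: 'p mod_ring) = (map_vec of_int z :: 'p mod_ring vec) $ k"
        using that by (simp add: z_def)
      also have "\<dots> = 0" unfolding \<open>map_vec of_int z = 0\<^sub>v r\<close> using that by simp
      finally show ?thesis .
    qed
    then have "int CARD('p) * g dvd y $ k" if "k < r" for k
      using that yz y(1) unfolding of_int_mod_ring_eq_0_iff by (simp add: mult.commute)
    then have "int CARD('p) * g dvd g"
      unfolding g_def using y(1) by (intro Gcd_greatest) (auto simp: vec_set_def)
    then have "int CARD('p) dvd 1" using g0 dvd_mult_cancel_right[of _ g 1] by simp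
    then show False using prime_card_int[where 'a = 'p] by (simp add: not_prime_unit)
  qed
  with g0 yz show thesis by (intro that[of g z]) (auto simp: z_def)
qed

(* Clearing denominators and then dividing by the gcd of the entries gives an integer kernel
   vector that does not vanish modulo p. *)
lemma mod_p_kernel_of_rat_kernel:
  fixes N :: "int mat" and v :: "rat vec"
  assumes N: "N \<in> carrier_mat n r" and v: "v \<in> carrier_vec r" "v \<noteq> 0\<^sub>v r"
    and Nv: "map_mat of_int N *\<^sub>v v = 0\<^sub>v n"
  obtains z :: "'p::prime_card mod_ring vec"
  where "z \<in> carrier_vec r" "z \<noteq> 0\<^sub>v r" "map_mat of_int N *\<^sub>v z = 0\<^sub>v n"
proof -
  obtain d y where d: "d \<noteq> 0" and y: "y \<in> carrier_vec r"
    and dy: "map_vec of_int y = of_int d \<cdot>\<^sub>v v"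
    using rat_vec_clear_denominators[OF v(1)] .
  have "map_vec of_int (N *\<^sub>v y) = map_mat of_int N *\<^sub>v map_vec of_int y"
    by (rule of_int_hom.mult_mat_vec_hom[OF N y])
  also have "\<dots> = of_int d \<cdot>\<^sub>v (map_mat of_int N *\<^sub>v v)"
    unfolding dy using N v(1) by (simp add: mult_mat_vec)
  also have "\<dots> = 0\<^sub>v n" unfolding Nv by auto
  finally have Ny: "N *\<^sub>v y = 0\<^sub>v n" by (simp only: of_int_hom.vec_hom_zero_iff)
  obtain k where k: "k < r" "v $ k \<noteq> 0" using v by (metis eq_vecI carrier_vecD index_zero_vec)
  have "of_int (y $ k) = of_int d * v $ k"
    using arg_cong[OF dy, of "\<lambda>w. w $ k"] k y v(1) by simp
  then have "y \<noteq> 0\<^sub>v r" using d k by auto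
  then obtain g z where g: "g \<noteq> 0" and z: "z \<in> carrier_vec r" and yz: "y = g \<cdot>\<^sub>v z"
    and zp: "(map_vec of_int z :: 'p mod_ring vec) \<noteq> 0\<^sub>v r"
    using int_vec_primitive_mod_p[OF y] by blast
  have "N *\<^sub>v z = 0\<^sub>v n"
  proof (rule eq_vecI)
    fix i assume i: "i < dim_vec (0\<^sub>v n :: int vec)"
    have "g * (N *\<^sub>v z) $ i = (N *\<^sub>v y) $ i" using N z i unfolding yz by simp
    then show "(N *\<^sub>v z) $ i = 0\<^sub>v n $ i" using Ny g i by simp
  qed (use N in simp)
  then have "map_mat of_int N *\<^sub>v (map_vec of_int z :: 'p mod_ring vec) = 0\<^sub>v n"
    unfolding of_int_hom.mult_mat_vec_hom[OF N z, symmetric] by (simp add: of_int_hom.vec_hom_zero)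
  with z zp show thesis by (intro that[of "map_vec of_int z"]) auto
qed

lemma lin_indpt_rat_of_lin_indpt_mod_p:
  fixes vs :: "int vec list"
  assumes vs: "set vs \<subseteq> carrier_vec n"
    and dist: "distinct (map (map_vec of_int) vs :: 'p::prime_card mod_ring vec list)"
    and indpt: "\<not> LinearCombinations.module.lin_dep class_ring (module_vec TYPE('p mod_ring) n)
      (set (map (map_vec of_int) vs))"
  shows "\<not> LinearCombinations.module.lin_dep class_ring (module_vec TYPE(rat) n)
      (set (map (map_vec of_int) vs))"
proof
  let ?N = "mat_of_cols n vs"
  let ?Np = "map_mat of_int ?N :: 'p mod_ring mat" and ?Nq = "map_mat of_int ?N :: rat mat"
  have N: "?N \<in> carrier_mat n (length vs)" by simp
  have cols_map: "cols (map_mat f ?N) = map (map_vec f) vs" for f :: "int \<Rightarrow> 'a"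
  proof -
    have "set (map (map_vec f) vs) \<subseteq> carrier_vec n" using vs by auto
    then show ?thesis unfolding mat_of_cols_map[OF vs, symmetric] by (rule cols_mat_of_cols)
  qed
  have cols_Np: "cols ?Np = map (map_vec of_int) vs" and cols_Nq: "cols ?Nq = map (map_vec of_int) vs"
    by (rule cols_map)+
  have "distinct (map (map_vec of_int :: int vec \<Rightarrow> rat vec) vs)"
    using dist by (simp add: distinct_map inj_on_def of_int_hom.vec_hom_inj)
  moreover assume "LinearCombinations.module.lin_dep class_ring (module_vec TYPE(rat) n)
      (set (map (map_vec of_int) vs))"
  ultimately obtain v
    where v: "v \<in> carrier_vec (length vs)" "v \<noteq> 0\<^sub>v (length vs)" "?Nq *\<^sub>v v = 0\<^sub>v n"
    using vec_space.lin_depE[of ?Nq n "length vs"] N cols_Nq by auto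
  then obtain z :: "'p mod_ring vec"
    where "z \<in> carrier_vec (length vs)" "z \<noteq> 0\<^sub>v (length vs)" "?Np *\<^sub>v z = 0\<^sub>v n"
    using mod_p_kernel_of_rat_kernel[OF N] by blast
  then have "LinearCombinations.module.lin_dep class_ring (module_vec TYPE('p mod_ring) n) (set (cols ?Np))"
    using dist cols_Np by (intro vec_space.lin_depI) auto
  then show False using indpt cols_Np by simp
qed

lemma rank_mod_p_le_rank_rat:
  fixes M :: "int mat"
  assumes M: "M \<in> carrier_mat n nc"
  shows "vec_space.rank n (map_mat of_int M :: 'p::prime_card mod_ring mat)
    \<le> vec_space.rank n (map_mat of_int M :: rat mat)"
proof -
  let ?Mp = "map_mat of_int M :: 'p mod_ring mat" and ?Mq = "map_mat of_int M :: rat mat"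
  let ?indpt_p = "\<lambda>T. \<not> LinearCombinations.module.lin_dep class_ring (module_vec TYPE('p mod_ring) n) T"
  have Mp: "?Mp \<in> carrier_mat n nc" and Mq: "?Mq \<in> carrier_mat n nc" using M by auto
  have set_cols_map: "set (cols (map_mat f M)) = map_vec f ` set (cols M)" for f :: "int \<Rightarrow> 'a"
    using M by (auto simp: cols_def)
  let ?P = "\<lambda>T. T \<subseteq> set (cols ?Mp) \<and> ?indpt_p T"
  have "\<exists>S. finite S \<and> maximal S ?P \<and> {} \<subseteq> S"
    by (rule maximal_exists_superset[of "set (cols ?Mp)"])
      (auto simp: LinearCombinations.module.lin_dep_def[OF vec_module])
  then obtain S where S: "maximal S ?P" by blast
  then have "S \<subseteq> map_vec of_int ` set (cols M)" and S_indpt: "?indpt_p S"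
    unfolding maximal_def set_cols_map by auto
  then obtain T
    where T: "T \<subseteq> set (cols M)" "inj_on (map_vec of_int :: int vec \<Rightarrow> 'p mod_ring vec) T"
    and S_T: "S = map_vec of_int ` T"
    by (auto simp: subset_image_inj)
  obtain vs where vs: "set vs = T" "distinct vs" using finite_distinct_list[of T] T(1) finite_subset by blast
  have vs_carrier: "set vs \<subseteq> carrier_vec n" using vs(1) T(1) M cols_dim by blast
  have dist_p: "distinct (map (map_vec of_int) vs :: 'p mod_ring vec list)"
    using vs T(2) by (simp add: distinct_map)
  have dist_q: "distinct (map (map_vec of_int) vs :: rat vec list)"
    using vs by (simp add: distinct_map inj_on_def of_int_hom.vec_hom_inj)
  have indpt_q: "\<not> LinearCombinations.module.lin_dep class_ring (module_vec TYPE(rat) n)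
      (set (map (map_vec of_int) vs))"
    using lin_indpt_rat_of_lin_indpt_mod_p[OF vs_carrier dist_p] S_indpt S_T vs(1) by simp
  have "set (map (map_vec of_int) vs) \<subseteq> set (cols ?Mq)"
    using vs(1) T(1) set_cols_map by auto
  then have "card (set (map (map_vec of_int) vs :: rat vec list)) \<le> vec_space.rank n ?Mq"
    using vec_space.rank_ge_card_indpt[OF Mq _ indpt_q] by blast
  moreover have "vec_space.rank n ?Mp = card S"
    using vec_space.rank_card_indpt[OF Mp S] .
  moreover have "card S = length vs" using distinct_card[OF dist_p] S_T vs(1) by simp
  ultimately show ?thesis using distinct_card[OF dist_q] by simp
qed

lemma of_nat_double_mod_ring_nonzero:
  assumes p: "odd CARD('p::prime_card)" and l: "\<not> CARD('p) dvd l"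
  shows "(of_nat (2 * l) :: 'p mod_ring) \<noteq> 0"
proof
  assume "(of_nat (2 * l) :: 'p mod_ring) = 0"
  then have "CARD('p) dvd 2 * l" by (simp only: of_nat_eq_0_iff_char_dvd semiring_char_mod_ring)
  then have "CARD('p) dvd 2" using l prime_dvd_mult_iff[OF prime_card[where 'a = 'p]] by blast
  then have "CARD('p) \<le> 2" by (simp add: dvd_imp_le)
  then show False using p prime_ge_2_nat[OF prime_card[where 'a = 'p]] by (simp add: le_antisym)
qed

section \<open>The walk matrix as an eigenbasis\<close>

lemma orthogonal_conj_neg_imp_anticommute:
  fixes Q S :: "'a::field mat"
  assumes Q: "Q \<in> carrier_mat n n" and S: "S \<in> carrier_mat n n"
    and orth: "Q\<^sup>T * Q = 1\<^sub>m n" and conj: "Q\<^sup>T * S * Q = - S"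
  shows "Q * S = - (S * Q)"
proof -
  have QT: "Q\<^sup>T \<in> carrier_mat n n" using Q by simp
  have "S * Q = (Q * Q\<^sup>T) * S * Q" using mat_mult_left_right_inverse[OF QT Q orth] S Q by simp
  also have "\<dots> = Q * (Q\<^sup>T * S * Q)"
    using Q QT S by (simp add: assoc_mult_mat[of _ n n _ n _ n])
  also have "\<dots> = - (Q * S)" unfolding conj using Q S by simp
  finally show ?thesis by simp
qed

lemma anticommute_pow_mat:
  fixes Q S :: "'a::comm_ring_1 mat"
  assumes Q: "Q \<in> carrier_mat n n" and S: "S \<in> carrier_mat n n" and anti: "Q * S = - (S * Q)"
  shows "Q * S ^\<^sub>m k = (-1) ^ k \<cdot>\<^sub>m (S ^\<^sub>m k * Q)"
proof (induction k)
  case 0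
  show ?case using Q S by (intro eq_matI) auto
next
  case (Suc k)
  have Sk: "S ^\<^sub>m k \<in> carrier_mat n n" using S by simp
  have "Q * S ^\<^sub>m Suc k = (Q * S ^\<^sub>m k) * S" by (simp add: assoc_mult_mat[OF Q Sk S])
  also have "\<dots> = (-1) ^ k \<cdot>\<^sub>m (S ^\<^sub>m k * (Q * S))"
    unfolding Suc.IH
    by (simp add: mult_smult_assoc_mat[OF mult_carrier_mat[OF Sk Q] S] assoc_mult_mat[OF Sk Q S])
  also have "\<dots> = (-1) ^ Suc k \<cdot>\<^sub>m (S ^\<^sub>m Suc k * Q)"
    unfolding anti using Sk Q S by (simp add: assoc_mult_mat[OF Sk S Q]) (intro eq_matI; simp)
  finally show ?case .
qed

lemma skew_adj_carrier: "skew_adj n Arc \<in> carrier_mat n n"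
  by (simp add: skew_adj_def)

lemma walk_matrix_carrier: "walk_matrix n Arc \<in> carrier_mat n n"
  by (simp add: walk_matrix_def)

lemma skew_adj_converse_graph:
  assumes "oriented_graph n Arc"
  shows "skew_adj n (converse_graph Arc) = - skew_adj n Arc"
  using assms unfolding oriented_graph_def
  by (intro eq_matI) (auto simp: skew_adj_def converse_graph_def)

lemma col_walk_matrix:
  assumes "k < n"
  shows "col (walk_matrix n Arc) k = skew_adj n Arc ^\<^sub>m k *\<^sub>v vec n (\<lambda>_. 1)"
  using assms skew_adj_carrier[of n Arc] by (intro eq_vecI) (auto simp: walk_matrix_def)

lemma det_walk_matrix_nonzero: "in_G n Arc \<Longrightarrow> det (walk_matrix n Arc) \<noteq> 0"
  unfolding in_G_def by auto

lemma walk_matrix_col_eigen: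
  assumes orient: "oriented_graph n Arc" and Q: "regular_rat_orthogonal n Q"
    and conj: "Q\<^sup>T * map_mat of_int (skew_adj n Arc) * Q
      = map_mat of_int (skew_adj n (converse_graph Arc))"
    and k: "k < n"
  shows "Q *\<^sub>v col (map_mat of_int (walk_matrix n Arc)) k
    = (-1) ^ k \<cdot>\<^sub>v col (map_mat of_int (walk_matrix n Arc)) k"
proof -
  let ?S = "map_mat (of_int :: int \<Rightarrow> rat) (skew_adj n Arc)" and ?e = "vec n (\<lambda>_. 1 :: rat)"
  have S: "?S \<in> carrier_mat n n" using skew_adj_carrier by simp
  have Qc: "Q \<in> carrier_mat n n" and orth: "Q\<^sup>T * Q = 1\<^sub>m n" and Qe: "Q *\<^sub>v ?e = ?e"
    using Q unfolding regular_rat_orthogonal_def by auto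
  have "map_mat of_int (skew_adj n (converse_graph Arc)) = - ?S"
    unfolding skew_adj_converse_graph[OF orient] by (intro eq_matI) auto
  then have anti: "Q * ?S = - (?S * Q)"
    using orthogonal_conj_neg_imp_anticommute[OF Qc S orth] conj by simp
  have Sk: "?S ^\<^sub>m k \<in> carrier_mat n n" using S by simp
  have map_vec_of_int_one: "map_vec of_int (vec n (\<lambda>_. 1)) = ?e" by auto
  have col: "col (map_mat of_int (walk_matrix n Arc)) k = ?S ^\<^sub>m k *\<^sub>v ?e"
  proof -
    have "col (map_mat of_int (walk_matrix n Arc)) k
        = map_vec of_int (skew_adj n Arc ^\<^sub>m k *\<^sub>v vec n (\<lambda>_. 1))"
      using k walk_matrix_carrier[of n Arc] by (simp add: col_map_mat col_walk_matrix)
    also have "\<dots> = ?S ^\<^sub>m k *\<^sub>v ?e"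
      using skew_adj_carrier[of n Arc] map_vec_of_int_one
      by (simp add: of_int_hom.mult_mat_vec_hom[of _ n n] of_int_hom.mat_hom_pow)
    finally show ?thesis .
  qed
  have "Q *\<^sub>v (?S ^\<^sub>m k *\<^sub>v ?e) = (Q * ?S ^\<^sub>m k) *\<^sub>v ?e"
    using Qc Sk by simp
  also have "\<dots> = (-1) ^ k \<cdot>\<^sub>v (?S ^\<^sub>m k *\<^sub>v (Q *\<^sub>v ?e))"
    unfolding anticommute_pow_mat[OF Qc S anti]
    using Qc Sk by (simp add: smult_mat_mult_vec[of _ n n])
  finally show ?thesis unfolding col Qe .
qed

lemma card_odd_below: "card {k. k < n \<and> odd k} = n div 2"
proof (induction n)
  case (Suc n)
  have "{k. k < Suc n \<and> odd k}
      = (if odd n then insert n {k. k < n \<and> odd k} else {k. k < n \<and> odd k})"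
    by (auto simp: less_Suc_eq)
  then show ?case using Suc by (auto elim!: oddE evenE)
qed simp

lemma card_even_below: "card {k. k < n \<and> even k} = (n + 1) div 2"
proof (induction n)
  case (Suc n)
  have "{k. k < Suc n \<and> even k}
      = (if even n then insert n {k. k < n \<and> even k} else {k. k < n \<and> even k})"
    by (auto simp: less_Suc_eq)
  then show ?case using Suc by (auto elim!: oddE evenE)
qed simp

lemma rank_rat_conj_converse_bounds:
  fixes c :: rat
  assumes G: "in_G n Arc" and Q: "regular_rat_orthogonal n Q"
    and conj: "Q\<^sup>T * map_mat of_int (skew_adj n Arc) * Q
      = map_mat of_int (skew_adj n (converse_graph Arc))"
  shows "vec_space.rank n (c \<cdot>\<^sub>m 1\<^sub>m n + (- c) \<cdot>\<^sub>m Q) \<le> n div 2"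
    and "vec_space.rank n (c \<cdot>\<^sub>m 1\<^sub>m n + c \<cdot>\<^sub>m Q) \<le> (n + 1) div 2"
proof -
  let ?W = "map_mat (of_int :: int \<Rightarrow> rat) (walk_matrix n Arc)"
  have orient: "oriented_graph n Arc" using G unfolding in_G_def by simp
  have Qc: "Q \<in> carrier_mat n n" using Q unfolding regular_rat_orthogonal_def by simp
  have W: "?W \<in> carrier_mat n n" using walk_matrix_carrier by simp
  have det: "det ?W \<noteq> 0" using det_walk_matrix_nonzero[OF G] by (simp add: of_int_hom.hom_det)
  have bound: "vec_space.rank n (c \<cdot>\<^sub>m 1\<^sub>m n + d \<cdot>\<^sub>m Q)
      \<le> card {k. k < n \<and> c + d * (-1) ^ k \<noteq> 0}" for d
    by (rule vec_space.rank_le_card_eigenbasis[OF Qc W det walk_matrix_col_eigen[OF orient Q conj]])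
  have "c + (- c) * (-1) ^ k = 0" if "even k" for k using that by simp
  then have "{k. k < n \<and> c + (- c) * (-1) ^ k \<noteq> 0} \<subseteq> {k. k < n \<and> odd k}" by blast
  then have "card {k. k < n \<and> c + (- c) * (-1) ^ k \<noteq> 0} \<le> card {k. k < n \<and> odd k}"
    by (rule card_mono[rotated]) simp
  then show "vec_space.rank n (c \<cdot>\<^sub>m 1\<^sub>m n + (- c) \<cdot>\<^sub>m Q) \<le> n div 2"
    using bound[of "- c"] card_odd_below[of n] by linarith
  have "c + c * (-1) ^ k = 0" if "odd k" for k using that by simp
  then have "{k. k < n \<and> c + c * (-1) ^ k \<noteq> 0} \<subseteq> {k. k < n \<and> even k}" by blast
  then have "card {k. k < n \<and> c + c * (-1) ^ k \<noteq> 0} \<le> card {k. k < n \<and> even k}"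
    by (rule card_mono[rotated]) simp
  then show "vec_space.rank n (c \<cdot>\<^sub>m 1\<^sub>m n + c \<cdot>\<^sub>m Q) \<le> (n + 1) div 2"
    using bound[of c] card_even_below[of n] by linarith
qed

lemma level_scales_to_integral:
  "0 < level Q \<and> (\<forall>i < dim_row Q. \<forall>j < dim_col Q. of_nat (level Q) * Q $$ (i, j) \<in> \<int>)"
proof -
  obtain d :: int where d: "d > 0"
    "\<forall>x \<in> {..<dim_row Q} \<times> {..<dim_col Q}. of_int d * (\<lambda>(i, j). Q $$ (i, j)) x \<in> \<int>"
    using common_denominator[of "{..<dim_row Q} \<times> {..<dim_col Q}"] by blast
  then have "0 < nat d \<and> (\<forall>i < dim_row Q. \<forall>j < dim_col Q. of_nat (nat d) * Q $$ (i, j) \<in> \<int>)"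
    by auto
  then show ?thesis unfolding level_def by (rule LeastI)
qed

lemma of_int_scaled_int_mat_level:
  "map_mat of_int (scaled_int_mat (level Q) Q) = of_nat (level Q) \<cdot>\<^sub>m Q"
proof (rule eq_matI)
  fix i j assume ij: "i < dim_row (of_nat (level Q) \<cdot>\<^sub>m Q)" "j < dim_col (of_nat (level Q) \<cdot>\<^sub>m Q)"
  then have "of_nat (level Q) * Q $$ (i, j) \<in> \<int>" using level_scales_to_integral[of Q] by simp
  then obtain z where "of_nat (level Q) * Q $$ (i, j) = of_int z" by (rule Ints_cases)
  then show "map_mat of_int (scaled_int_mat (level Q) Q) $$ (i, j) = (of_nat (level Q) \<cdot>\<^sub>m Q) $$ (i, j)"
    using ij by (simp add: scaled_int_mat_def)
qed (simp_all add: scaled_int_mat_def)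

lemma of_int_level_one_pm_scaled_int_mat:
  assumes Q: "Q \<in> carrier_mat n n"
  defines "l \<equiv> level Q"
  shows "map_mat of_int (of_nat l \<cdot>\<^sub>m 1\<^sub>m n - scaled_int_mat l Q)
      = of_nat l \<cdot>\<^sub>m 1\<^sub>m n + (- of_nat l) \<cdot>\<^sub>m Q" (is ?minus)
    and "map_mat of_int (of_nat l \<cdot>\<^sub>m 1\<^sub>m n + scaled_int_mat l Q)
      = of_nat l \<cdot>\<^sub>m 1\<^sub>m n + of_nat l \<cdot>\<^sub>m Q" (is ?plus)
proof -
  have Qb: "scaled_int_mat l Q \<in> carrier_mat n n" using Q unfolding scaled_int_mat_def by simp
  have "of_int (scaled_int_mat l Q $$ (i, j)) = of_nat l * Q $$ (i, j)" if "i < n" "j < n" for i j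
    using arg_cong[OF of_int_scaled_int_mat_level[of Q], of "\<lambda>M. M $$ (i, j)"] that Qb Q
    unfolding l_def by simp
  then show ?minus and ?plus using Qb Q by auto
qed

theorem lemma3p7:
  fixes n :: nat and Arc :: "(nat \<times> nat) set" and Q0 :: "rat mat"
  assumes G: "in_G n Arc"
    and Q0: "regular_rat_orthogonal n Q0"
    and Q0_conj: "Q0\<^sup>T * map_mat of_int (skew_adj n Arc) * Q0
                  = map_mat of_int (skew_adj n (converse_graph Arc))"
    and p_odd: "odd CARD('p::prime_card)"
    and p_ndvd: "\<not> CARD('p) dvd level Q0"
  shows "let l0 = level Q0; Qb = scaled_int_mat l0 Q0;
             rm = vec_space.rank n (mod_p_mat (of_nat l0 \<cdot>\<^sub>m 1\<^sub>m n - Qb) :: 'p mod_ring mat);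
             rp = vec_space.rank n (mod_p_mat (of_nat l0 \<cdot>\<^sub>m 1\<^sub>m n + Qb) :: 'p mod_ring mat)
         in (even n \<longrightarrow> rm = n div 2 \<and> rp = n div 2) \<and>
            (odd n \<longrightarrow> rm = (n - 1) div 2 \<and> rp = (n + 1) div 2)"
proof -
  define l where "l = level Q0"
  define A where "A = of_nat l \<cdot>\<^sub>m 1\<^sub>m n - scaled_int_mat l Q0"
  define B where "B = of_nat l \<cdot>\<^sub>m 1\<^sub>m n + scaled_int_mat l Q0"
  have Q0c: "Q0 \<in> carrier_mat n n" using Q0 unfolding regular_rat_orthogonal_def by simp
  then have Qb: "scaled_int_mat l Q0 \<in> carrier_mat n n" unfolding scaled_int_mat_def by simp
  then have A: "A \<in> carrier_mat n n" and B: "B \<in> carrier_mat n n" unfolding A_def B_def by auto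
  have sum: "mod_p_mat A + mod_p_mat B = (of_nat (2 * l) :: 'p mod_ring) \<cdot>\<^sub>m 1\<^sub>m n"
    using Qb by (auto simp: mod_p_mat_def A_def B_def)
  have "vec_space.rank n (mod_p_mat A :: 'p mod_ring mat) \<le> n div 2"
    using rank_mod_p_le_rank_rat[OF A] rank_rat_conj_converse_bounds(1)[OF G Q0 Q0_conj]
    unfolding mod_p_mat_def A_def l_def of_int_level_one_pm_scaled_int_mat(1)[OF Q0c]
    by (meson le_trans)
  moreover have "vec_space.rank n (mod_p_mat B :: 'p mod_ring mat) \<le> (n + 1) div 2"
    using rank_mod_p_le_rank_rat[OF B] rank_rat_conj_converse_bounds(2)[OF G Q0 Q0_conj]
    unfolding mod_p_mat_def B_def l_def of_int_level_one_pm_scaled_int_mat(2)[OF Q0c]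
    by (meson le_trans)
  moreover have "n \<le> vec_space.rank n (mod_p_mat A :: 'p mod_ring mat)
      + vec_space.rank n (mod_p_mat B :: 'p mod_ring mat)"
    using A B sum of_nat_double_mod_ring_nonzero[OF p_odd p_ndvd[folded l_def]]
    by (intro vec_space.le_rank_add_of_add_eq_smult_one) (auto simp: mod_p_mat_def)
  ultimately show ?thesis
    unfolding Let_def l_def[symmetric] A_def[symmetric] B_def[symmetric]
    by (auto elim!: oddE evenE)
qed

end
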